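(* Let $\mu\in\mathcal{P}(\mathcal{X})$ and $K:\mathcal{X}\times\mathcal{X}\to(0,1]$ measurable with lower decay $l$, and assume $\lim_{r\to\infty}\frac{\mu(B_r^{\mathsf c})}{l(r)^2}=0$. Then there exists $\underline m>0$ such that for all $m=m_1=m_2>\underline m$ and $\alpha(r)=\tilde\alpha(r)=\sqrt{\mu(B_r^{\mathsf c})}$, $r\ge0$, the operator $L_{K,\mu}$ is a strict contraction on $\mathcal{G}^{\mu}_{\alpha,\tilde\alpha}\setminus\{0\}$ with respect to $d_{\mathcal{G}^{\mu}_{\alpha,\tilde\alpha}}$, i.e., there is $\kappa\in(0,1)$ with $d_{\mathcal{G}^{\mu}_{\alpha,\tilde\alpha}}(L_{K,\mu}g,L_{K,\mu}\tilde g)\le\kappa\,d_{\mathcal{G}^{\mu}_{\alpha,\tilde\alpha}}(g,\tilde g)$ for all $g,\tilde g\in\mathcal{G}^{\mu}_{\alpha,\tilde\alpha}\setminus\{0\}$.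
   Context: $\mathcal{X}$ is a Polish space with metric $d_{\mathcal{X}}$, $x_0$ fixed, $B_r=\{x:d_{\mathcal{X}}(x_0,x)\le r\}$, $B_r^{\mathsf c}=\mathcal{X}\setminus B_r$. A non-increasing $l:[0,\infty)\to[0,\infty)$ is a lower decay of $K$ if $\inf_{x,y\in B_r}K(x,y)\ge l(r)$ for all $r>0$. $L_{K,\mu}f(x)=\int K(x,y)f(y)\,\mu(dy)$. Standing assumptions: $\mu(B_{m_1})>0$ and $\alpha(r)>0$ for all $r>0$. $\mathcal{F}^{\mu}_{\alpha,\tilde\alpha}$ is the set of $f\in L^2(\mu)$ with $f\mathbf 1_{B_{m_2}}\ge0$ $\mu$-a.s., $\int_{B_r^{\mathsf c}}f_+\,d\mu\le\alpha(r)\int f\,d\mu$ for all $r\ge m_1$, $\int_{B_r^{\mathsf c}}f_-\,d\mu\le\tilde\alpha(r)\int f\,d\mu$ for all $r\ge m_2$; $\mathcal{G}^{\mu}_{\alpha,\tilde\alpha}=\{g\in L^2(\mu):\int fg\,d\mu\ge0\ \forall f\in\mathcal{F}^{\mu}_{\alpha,\tilde\alpha}\}$. Hilbert's metric for a cone $C$: $f\le_C g$ iff $g-f\in C$; $f\sim_C g$ iff $f\le_C bg$ and $g\le_C b'f$ for some $b,b'>0$; $M(f,g)=\inf\{b>0:bg-f\in C\}$, $m(f,g)=\sup\{a>0:f-ag\in C\}$; $d_C(f,g)=\log(M/m)$ if $f\sim_C g$, $g\ne0$, and $\infty$ otherwise. *)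

theory Defs
  imports "HOL-Probability.Probability"
begin

definition ball_r :: "'a::metric_space \<Rightarrow> real \<Rightarrow> 'a set" where
  "ball_r x0 r = {x. dist x0 x \<le> r}"

definition lower_decay :: "'a::metric_space \<Rightarrow> ('a \<Rightarrow> 'a \<Rightarrow> real) \<Rightarrow> (real \<Rightarrow> real) \<Rightarrow> bool" where
  "lower_decay x0 K l \<longleftrightarrow>
     antimono_on {0..} l \<and> (\<forall>r\<ge>0. l r \<ge> 0) \<and>
     (\<forall>r>0. (INF p\<in>ball_r x0 r \<times> ball_r x0 r. K (fst p) (snd p)) \<ge> l r)"

definition L2 :: "'a measure \<Rightarrow> ('a \<Rightarrow> real) set" where
  "L2 M = {f. f \<in> borel_measurable M \<and> integrable M (\<lambda>x. (f x)\<^sup>2)}"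

definition L_op :: "'a measure \<Rightarrow> ('a \<Rightarrow> 'a \<Rightarrow> real) \<Rightarrow> ('a \<Rightarrow> real) \<Rightarrow> ('a \<Rightarrow> real)" where
  "L_op M K f = (\<lambda>x. \<integral>y. K x y * f y \<partial>M)"

definition F_cone :: "'a measure \<Rightarrow> 'a::metric_space \<Rightarrow> real \<Rightarrow> real \<Rightarrow> (real \<Rightarrow> real)
     \<Rightarrow> (real \<Rightarrow> real) \<Rightarrow> ('a \<Rightarrow> real) set" where
  "F_cone M x0 m1 m2 \<alpha> \<alpha>' = {f \<in> L2 M.
     (AE x in M. x \<in> ball_r x0 m2 \<longrightarrow> f x \<ge> 0) \<and>
     (\<forall>r\<ge>m1. (LINT x:(space M - ball_r x0 r)|M. max (f x) 0) \<le> \<alpha> r * (\<integral>x. f x \<partial>M)) \<and>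
     (\<forall>r\<ge>m2. (LINT x:(space M - ball_r x0 r)|M. max (- f x) 0) \<le> \<alpha>' r * (\<integral>x. f x \<partial>M))}"

definition G_cone :: "'a measure \<Rightarrow> 'a::metric_space \<Rightarrow> real \<Rightarrow> real \<Rightarrow> (real \<Rightarrow> real)
     \<Rightarrow> (real \<Rightarrow> real) \<Rightarrow> ('a \<Rightarrow> real) set" where
  "G_cone M x0 m1 m2 \<alpha> \<alpha>' = {g \<in> L2 M. \<forall>f \<in> F_cone M x0 m1 m2 \<alpha> \<alpha>'. (\<integral>x. f x * g x \<partial>M) \<ge> 0}"

text \<open>Hilbert's projective metric for a cone C of functions; an element is zero
  iff it vanishes mu-almost everywhere (elements of L^2(mu) are equivalence classes).\<close>
definition cone_le :: "('a \<Rightarrow> real) set \<Rightarrow> ('a \<Rightarrow> real) \<Rightarrow> ('a \<Rightarrow> real) \<Rightarrow> bool" where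
  "cone_le C f g \<longleftrightarrow> (\<lambda>x. g x - f x) \<in> C"

definition cone_equiv :: "('a \<Rightarrow> real) set \<Rightarrow> ('a \<Rightarrow> real) \<Rightarrow> ('a \<Rightarrow> real) \<Rightarrow> bool" where
  "cone_equiv C f g \<longleftrightarrow> (\<exists>b>0. \<exists>b'>0. cone_le C f (\<lambda>x. b * g x) \<and> cone_le C g (\<lambda>x. b' * f x))"

definition hilbert_M :: "('a \<Rightarrow> real) set \<Rightarrow> ('a \<Rightarrow> real) \<Rightarrow> ('a \<Rightarrow> real) \<Rightarrow> real" where
  "hilbert_M C f g = Inf {b. b > 0 \<and> (\<lambda>x. b * g x - f x) \<in> C}"

definition hilbert_m :: "('a \<Rightarrow> real) set \<Rightarrow> ('a \<Rightarrow> real) \<Rightarrow> ('a \<Rightarrow> real) \<Rightarrow> real" where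
  "hilbert_m C f g = Sup {a. a > 0 \<and> (\<lambda>x. f x - a * g x) \<in> C}"

definition hilbert_dist :: "'a measure \<Rightarrow> ('a \<Rightarrow> real) set \<Rightarrow> ('a \<Rightarrow> real) \<Rightarrow> ('a \<Rightarrow> real) \<Rightarrow> ereal" where
  "hilbert_dist M C f g =
     (if cone_equiv C f g \<and> \<not> (AE x in M. g x = 0)
      then ereal (ln (hilbert_M C f g / hilbert_m C f g)) else \<infinity>)"

end

theory Submission
  imports Defs
begin

text \<open>
  For large \<open>m\<close> the tail \<open>A = \<alpha> m = sqrt (\<mu> (B\<^sub>m\<^sup>c))\<close> is small compared with \<open>l m\<close>.
  Pairing \<open>g \<in> G\<close> with indicators of subsets of \<open>B = B\<^sub>m\<close> and with the test function
  \<open>1\<^sub>B - sgn g / \<epsilon> \<cdot> 1\<^bsub>B\<^sup>c\<^esub>\<close>, both in \<open>F\<close>, shows that \<open>g \<ge> 0\<close> on \<open>B\<close> and that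
  \<open>\<integral>\<^bsub>B\<^sup>c\<^esub> \<bar>g\<bar> \<le> \<epsilon> S g\<close>, where \<open>S g = \<integral>\<^sub>B g\<close> (\<open>ball_mass\<close>) and \<open>\<epsilon> = O(A)\<close>.
  Consequently \<open>L g\<close> is sandwiched in the order of \<open>G\<close> between the constants
  \<open>l m / 2 \<cdot> S g\<close> and \<open>3 \<cdot> S g\<close>. Birkhoff's argument turns such a sandwich into a
  contraction of Hilbert's metric by \<open>(k - 1) / (k + 1)\<close> with \<open>k = 6 / l m\<close>: if
  \<open>M' g' - g\<close> and \<open>g - m' g'\<close> lie in \<open>G\<close>, the combinations of their sandwiches in which
  the constants cancel give \<open>b L g' - L g\<close> and \<open>L g - a L g'\<close> in \<open>G\<close> with
  \<open>ln (b / a) \<le> (k - 1) / (k + 1) \<cdot> ln (M' / m')\<close>.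
\<close>

lemma L2_integrable:
  assumes "finite_measure M" "f \<in> L2 M"
  shows "integrable M f"
  using assms finite_measure.square_integrable_imp_integrable unfolding L2_def by blast

lemma L2_mult_integrable:
  assumes "f \<in> L2 M" "g \<in> L2 M"
  shows "integrable M (\<lambda>x. f x * g x)"
proof (rule Bochner_Integration.integrable_bound)
  show "integrable M (\<lambda>x. (f x)\<^sup>2 + (g x)\<^sup>2)"
    using assms unfolding L2_def by auto
  show "(\<lambda>x. f x * g x) \<in> borel_measurable M"
    using assms unfolding L2_def by auto
  have "\<bar>f x * g x\<bar> \<le> (f x)\<^sup>2 + (g x)\<^sup>2" for x
  proof -
    have "2 * (\<bar>f x\<bar> * \<bar>g x\<bar>) \<le> (f x)\<^sup>2 + (g x)\<^sup>2"
      using sum_squares_bound[of "\<bar>f x\<bar>" "\<bar>g x\<bar>"] by simp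
    moreover have "0 \<le> \<bar>f x\<bar> * \<bar>g x\<bar>"
      by simp
    ultimately show ?thesis
      unfolding abs_mult by linarith
  qed
  then show "AE x in M. norm (f x * g x) \<le> norm ((f x)\<^sup>2 + (g x)\<^sup>2)"
    by simp
qed

lemma L2_lincomb:
  assumes "f \<in> L2 M" "g \<in> L2 M"
  shows "(\<lambda>x. a * f x + b * g x) \<in> L2 M"
proof -
  have "(\<lambda>x. (a * f x + b * g x)\<^sup>2) = (\<lambda>x. a\<^sup>2 * (f x * f x) + 2 * a * b * (f x * g x) + b\<^sup>2 * (g x * g x))"
    by (auto simp: power2_eq_square algebra_simps)
  then show ?thesis
    using assms L2_mult_integrable[of _ M] unfolding L2_def by auto
qed

lemma L2_bounded:
  assumes "finite_measure M" "f \<in> borel_measurable M" "\<And>x. \<bar>f x\<bar> \<le> D"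
  shows "f \<in> L2 M"
proof -
  have "integrable M (\<lambda>x. (f x)\<^sup>2)"
  proof (rule Bochner_Integration.integrable_bound)
    show "integrable M (\<lambda>x. D\<^sup>2)"
      using assms(1) finite_measure.integrable_const by blast
    have "\<bar>f x\<bar> \<le> \<bar>D\<bar>" for x
      using assms(3)[of x] by linarith
    then show "AE x in M. norm ((f x)\<^sup>2) \<le> norm (D\<^sup>2)"
      by (simp add: abs_le_square_iff)
  qed (use assms in auto)
  then show ?thesis
    using assms unfolding L2_def by auto
qed

lemma L2_AE_cong:
  assumes "f \<in> L2 M" "g \<in> borel_measurable M" "AE x in M. f x = g x"
  shows "g \<in> L2 M"
proof -
  have "integrable M (\<lambda>x. (g x)\<^sup>2)"
    using assms unfolding L2_def
    by (subst integrable_cong_AE[where g="\<lambda>x. (f x)\<^sup>2"]) auto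
  then show ?thesis
    using assms unfolding L2_def by auto
qed

lemma integral_mult_lincomb:
  assumes "f \<in> L2 M" "u \<in> L2 M" "v \<in> L2 M"
  shows "(\<integral>x. f x * (a * u x + b * v x) \<partial>M) = a * (\<integral>x. f x * u x \<partial>M) + b * (\<integral>x. f x * v x \<partial>M)"
proof -
  have "(\<lambda>x. f x * (a * u x + b * v x)) = (\<lambda>x. a * (f x * u x) + b * (f x * v x))"
    by (auto simp: algebra_simps)
  then show ?thesis
    using L2_mult_integrable[OF assms(1,2)] L2_mult_integrable[OF assms(1,3)] by simp
qed

lemma integrable_real_mult_indicator:
  fixes f :: "'a \<Rightarrow> real"
  shows "integrable M f \<Longrightarrow> E \<in> sets M \<Longrightarrow> integrable M (\<lambda>x. indicator E x * f x)"
  using integrable_mult_indicator[of E M f] by simp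

lemma inverse_diff_le:
  fixes k \<theta> x :: real
  assumes k: "1 \<le> k" and \<theta>: "0 < \<theta>" and x: "0 < x"
  shows "1 / (x + \<theta>) - 1 / (x + k\<^sup>2 * \<theta>) \<le> (k - 1) / (k + 1) / x"
proof -
  define \<kappa> where "\<kappa> = (k - 1) / (k + 1)"
  define P where "P = (x + \<theta>) * (x + k\<^sup>2 * \<theta>)"
  have k2\<theta>: "0 < k\<^sup>2 * \<theta>"
    using k \<theta> by simp
  have P: "0 < P"
    unfolding P_def using x \<theta> k2\<theta> by simp
  \<comment> \<open>\<open>(k + 1)\<^sup>2 \<theta> x \<le> P\<close> is \<open>0 \<le> (x - k \<theta>)\<^sup>2\<close>\<close>
  have "(k + 1)\<^sup>2 * \<theta> * x \<le> P"
    unfolding P_def using sum_squares_bound[of x "k * \<theta>"] by (simp add: power2_eq_square algebra_simps)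
  then have "(k - 1) * ((k + 1)\<^sup>2 * \<theta> * x) \<le> (k - 1) * P"
    using k by (intro mult_left_mono) auto
  then have "(k + 1) * ((k\<^sup>2 - 1) * \<theta> * x) \<le> (k - 1) * P"
    by (simp add: power2_eq_square algebra_simps)
  then have "(k\<^sup>2 - 1) * \<theta> * x \<le> \<kappa> * P"
    using k unfolding \<kappa>_def by (simp add: field_simps)
  then have "(k\<^sup>2 - 1) * \<theta> / P \<le> \<kappa> / x"
    using x P by (simp add: divide_simps mult.commute)
  moreover have "1 / (x + \<theta>) - 1 / (x + k\<^sup>2 * \<theta>) = (k\<^sup>2 - 1) * \<theta> / P"
    unfolding P_def using x \<theta> k2\<theta> by (simp add: field_simps)
  ultimately show ?thesis
    unfolding \<kappa>_def by simp
qed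

lemma birkhoff_ratio_bound:
  fixes k \<theta> R :: real
  assumes k: "1 \<le> k" and \<theta>: "0 < \<theta>" and R: "1 \<le> R"
  shows "ln ((R + \<theta>) / (1 + \<theta>)) - ln ((R + k\<^sup>2 * \<theta>) / (1 + k\<^sup>2 * \<theta>)) \<le> (k - 1) / (k + 1) * ln R"
proof -
  define \<kappa> where "\<kappa> = (k - 1) / (k + 1)"
  define \<psi> where "\<psi> x = \<kappa> * ln x - ln (x + \<theta>) + ln (x + k\<^sup>2 * \<theta>)" for x
  have k2\<theta>: "0 < k\<^sup>2 * \<theta>"
    using k \<theta> by simp
  have "\<psi> 1 \<le> \<psi> R"
  proof (rule DERIV_nonneg_imp_nondecreasing[OF R])
    fix x :: real
    assume "1 \<le> x"
    then have x: "0 < x"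
      by simp
    have "DERIV \<psi> x :> \<kappa> / x - 1 / (x + \<theta>) + 1 / (x + k\<^sup>2 * \<theta>)"
      unfolding \<psi>_def using x \<theta> k2\<theta> by (auto intro!: derivative_eq_intros)
    moreover have "0 \<le> \<kappa> / x - 1 / (x + \<theta>) + 1 / (x + k\<^sup>2 * \<theta>)"
      using inverse_diff_le[OF k \<theta> x] unfolding \<kappa>_def by simp
    ultimately show "\<exists>y. DERIV \<psi> x :> y \<and> 0 \<le> y"
      by blast
  qed
  then show ?thesis
    using \<theta> k2\<theta> R unfolding \<psi>_def \<kappa>_def by (simp add: ln_div)
qed

lemma weighted_mean_eq:
  fixes p q mx Mx :: real
  assumes "0 < mx" "0 < p" "0 < q"
  shows "(p * Mx + q * mx) / (p + q) = mx * ((Mx / mx + q / p) / (1 + q / p))"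
proof -
  have "p * (Mx / mx + q / p) = (p * Mx + q * mx) / mx" "p * (1 + q / p) = p + q"
    using assms by (simp_all add: field_simps)
  then have "(Mx / mx + q / p) / (1 + q / p) = (p * Mx + q * mx) / mx / (p + q)"
    by (metis mult_divide_mult_cancel_left assms(2) less_irrefl)
  then show ?thesis
    using assms(1) by simp
qed

lemma birkhoff_weighted_ratio_bound:
  fixes c c' s t mx Mx :: real
  assumes c: "0 < c" "c < c'" and st: "0 < s" "0 < t" and mx: "0 < mx" "mx \<le> Mx"
  shows "ln (((c' * t * Mx + c * s * mx) / (c' * t + c * s)) / ((c * t * Mx + c' * s * mx) / (c * t + c' * s)))
    \<le> (c' - c) / (c' + c) * ln (Mx / mx)"
proof -
  define R where "R = Mx / mx"
  define k where "k = c' / c"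
  define \<theta> where "\<theta> = c * s / (c' * t)"
  define X where "X = (R + \<theta>) / (1 + \<theta>)"
  define Y where "Y = (R + k\<^sup>2 * \<theta>) / (1 + k\<^sup>2 * \<theta>)"
  have c': "0 < c'"
    using c by simp
  have R: "1 \<le> R" and k: "1 \<le> k" and \<theta>: "0 < \<theta>"
    unfolding R_def k_def \<theta>_def using mx c c' st by auto
  have X: "0 < X" and Y: "0 < Y"
    unfolding X_def Y_def using R \<theta> by (auto intro!: divide_pos_pos add_pos_nonneg)
  have "k\<^sup>2 * \<theta> = c' * s / (c * t)"
    unfolding k_def \<theta>_def using c c' st by (simp add: field_simps power2_eq_square)
  then have a: "(c * t * Mx + c' * s * mx) / (c * t + c' * s) = mx * Y"
    unfolding Y_def R_def using weighted_mean_eq[of mx "c * t" "c' * s" Mx] mx c c' st by simp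
  have b: "(c' * t * Mx + c * s * mx) / (c' * t + c * s) = mx * X"
    unfolding X_def R_def \<theta>_def using weighted_mean_eq[of mx "c' * t" "c * s" Mx] mx c c' st by simp
  have "ln ((mx * X) / (mx * Y)) = ln X - ln Y"
    using mx X Y by (simp add: ln_div)
  also have "\<dots> \<le> (k - 1) / (k + 1) * ln R"
    unfolding X_def Y_def by (rule birkhoff_ratio_bound[OF k \<theta> R])
  also have "(k - 1) / (k + 1) = (c' - c) / (c' + c)"
  proof -
    have "c * (k - 1) = c' - c" "c * (k + 1) = c' + c"
      unfolding k_def using c by (simp_all add: algebra_simps)
    then show ?thesis
      by (metis mult_divide_mult_cancel_left c(1) less_irrefl)
  qed
  finally show ?thesis
    unfolding a b R_def .
qed

section \<open>Hilbert's metric on dual cones\<close>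

lemma le_cInf_mult:
  fixes P Q :: real
  assumes "S \<noteq> {}" "\<And>b. b \<in> S \<Longrightarrow> 0 \<le> b" "\<And>b. b \<in> S \<Longrightarrow> Q \<le> b * P" "0 \<le> P"
  shows "Q \<le> Inf S * P"
proof (cases "P = 0")
  case True
  then show ?thesis
    using assms(1,3) by auto
next
  case False
  then have "Q / P \<le> Inf S"
    using assms by (intro cInf_greatest) (auto simp: divide_le_eq)
  then show ?thesis
    using False assms(4) by (simp add: divide_le_eq)
qed

lemma cSup_mult_le:
  fixes P Q :: real
  assumes "S \<noteq> {}" "bdd_above S" "\<And>a. a \<in> S \<Longrightarrow> a * P \<le> Q" "0 \<le> P"
  shows "Sup S * P \<le> Q"
proof (cases "P = 0")
  case True
  then show ?thesis
    using assms(1,3) by auto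
next
  case False
  then have "Sup S \<le> Q / P"
    using assms by (intro cSup_least) (auto simp: le_divide_eq)
  then show ?thesis
    using False assms(4) by (simp add: le_divide_eq)
qed

definition dual_cone :: "'a measure \<Rightarrow> ('a \<Rightarrow> real) set \<Rightarrow> ('a \<Rightarrow> real) set" where
  "dual_cone M F = {g \<in> L2 M. \<forall>f\<in>F. 0 \<le> (\<integral>x. f x * g x \<partial>M)}"

lemma G_cone_eq_dual_cone: "G_cone M x0 m1 m2 \<alpha> \<alpha>' = dual_cone M (F_cone M x0 m1 m2 \<alpha> \<alpha>')"
  unfolding G_cone_def dual_cone_def by auto

locale L2_dual_cone =
  fixes M :: "'a measure" and F :: "('a \<Rightarrow> real) set"
  assumes F_subset_L2: "F \<subseteq> L2 M"
begin

abbreviation C :: "('a \<Rightarrow> real) set" where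
  "C \<equiv> dual_cone M F"

lemma cone_L2: "g \<in> C \<Longrightarrow> g \<in> L2 M"
  unfolding dual_cone_def by auto

lemma cone_measurable: "g \<in> C \<Longrightarrow> g \<in> borel_measurable M"
  using cone_L2 unfolding L2_def by auto

lemma coneI: "g \<in> L2 M \<Longrightarrow> (\<And>f. f \<in> F \<Longrightarrow> 0 \<le> (\<integral>x. f x * g x \<partial>M)) \<Longrightarrow> g \<in> C"
  unfolding dual_cone_def by auto

lemma coneD: "g \<in> C \<Longrightarrow> f \<in> F \<Longrightarrow> 0 \<le> (\<integral>x. f x * g x \<partial>M)"
  unfolding dual_cone_def by auto

lemma cone_lincomb:
  assumes "u \<in> C" "v \<in> C" "0 \<le> a" "0 \<le> b"
  shows "(\<lambda>x. a * u x + b * v x) \<in> C"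
proof (rule coneI)
  show "(\<lambda>x. a * u x + b * v x) \<in> L2 M"
    using L2_lincomb cone_L2 assms(1,2) by blast
  fix f
  assume f: "f \<in> F"
  then show "0 \<le> (\<integral>x. f x * (a * u x + b * v x) \<partial>M)"
    using integral_mult_lincomb[of f M u v a b] F_subset_L2 cone_L2 coneD assms by auto
qed

lemma cone_scale: "u \<in> C \<Longrightarrow> 0 \<le> a \<Longrightarrow> (\<lambda>x. a * u x) \<in> C"
  using cone_lincomb[of u u a 0] by simp

lemma cone_add: "u \<in> C \<Longrightarrow> v \<in> C \<Longrightarrow> (\<lambda>x. u x + v x) \<in> C"
  using cone_lincomb[of u v 1 1] by simp

lemma cone_scale_cancel:
  assumes "(\<lambda>x. p * u x) \<in> C" "0 < p"
  shows "u \<in> C"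
  using cone_scale[OF assms(1), of "1 / p"] assms(2) by simp

lemma cone_AE_cong:
  assumes "u \<in> C" "w \<in> borel_measurable M" "AE x in M. u x = w x"
  shows "w \<in> C"
proof (rule coneI)
  show "w \<in> L2 M"
    using L2_AE_cong cone_L2 assms by blast
  fix f
  assume f: "f \<in> F"
  then have "(\<integral>x. f x * w x \<partial>M) = (\<integral>x. f x * u x \<partial>M)"
    using assms cone_measurable[OF assms(1)] F_subset_L2 unfolding L2_def
    by (intro integral_cong_AE) auto
  then show "0 \<le> (\<integral>x. f x * w x \<partial>M)"
    using coneD[OF assms(1) f] by simp
qed

lemma cone_zero: "(\<lambda>x. 0) \<in> C"
  by (rule coneI) (auto simp: L2_def)

text \<open>The dual cone is closed, so the infimum in \<open>hilbert_M\<close> and the supremum in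
  \<open>hilbert_m\<close> are attained.\<close>

lemma hilbert_M_mem:
  assumes g: "g \<in> L2 M" and g': "g' \<in> C" and b: "0 < b" "(\<lambda>x. b * g' x - g x) \<in> C"
  shows "(\<lambda>x. hilbert_M C g g' * g' x - g x) \<in> C"
proof (rule coneI)
  define Bs where "Bs = {b. 0 < b \<and> (\<lambda>x. b * g' x - g x) \<in> C}"
  show "(\<lambda>x. hilbert_M C g g' * g' x - g x) \<in> L2 M"
    using L2_lincomb[OF cone_L2[OF g'] g, of _ "-1"] by simp
  fix f
  assume f: "f \<in> F"
  have il: "(\<integral>x. f x * (d * g' x - g x) \<partial>M) = d * (\<integral>x. f x * g' x \<partial>M) - (\<integral>x. f x * g x \<partial>M)" for d
    using integral_mult_lincomb[of f M g' g d "-1"] f F_subset_L2 cone_L2[OF g'] g by auto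
  have "(\<integral>x. f x * g x \<partial>M) \<le> d * (\<integral>x. f x * g' x \<partial>M)" if "d \<in> Bs" for d
    using coneD[OF _ f, of "\<lambda>x. d * g' x - g x"] il[of d] that unfolding Bs_def by simp
  then have "(\<integral>x. f x * g x \<partial>M) \<le> Inf Bs * (\<integral>x. f x * g' x \<partial>M)"
    using b coneD[OF g' f] by (intro le_cInf_mult) (auto simp: Bs_def)
  then show "0 \<le> (\<integral>x. f x * (hilbert_M C g g' * g' x - g x) \<partial>M)"
    unfolding il hilbert_M_def Bs_def by simp
qed

lemma hilbert_m_mem:
  assumes g: "g \<in> L2 M" and g': "g' \<in> C" and a: "0 < a" "(\<lambda>x. g x - a * g' x) \<in> C"
    and bdd: "bdd_above {a. 0 < a \<and> (\<lambda>x. g x - a * g' x) \<in> C}"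
  shows "(\<lambda>x. g x - hilbert_m C g g' * g' x) \<in> C"
proof (rule coneI)
  define As where "As = {a. 0 < a \<and> (\<lambda>x. g x - a * g' x) \<in> C}"
  show "(\<lambda>x. g x - hilbert_m C g g' * g' x) \<in> L2 M"
    using L2_lincomb[OF g cone_L2[OF g'], of 1 "- hilbert_m C g g'"] by simp
  fix f
  assume f: "f \<in> F"
  have il: "(\<integral>x. f x * (g x - d * g' x) \<partial>M) = (\<integral>x. f x * g x \<partial>M) - d * (\<integral>x. f x * g' x \<partial>M)" for d
    using integral_mult_lincomb[of f M g g' 1 "-d"] f F_subset_L2 cone_L2[OF g'] g by auto
  have "d * (\<integral>x. f x * g' x \<partial>M) \<le> (\<integral>x. f x * g x \<partial>M)" if "d \<in> As" for d
    using coneD[OF _ f, of "\<lambda>x. g x - d * g' x"] il[of d] that unfolding As_def by simp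
  then have "Sup As * (\<integral>x. f x * g' x \<partial>M) \<le> (\<integral>x. f x * g x \<partial>M)"
    using a bdd coneD[OF g' f] unfolding As_def by (intro cSup_mult_le) auto
  then show "0 \<le> (\<integral>x. f x * (g x - hilbert_m C g g' * g' x) \<partial>M)"
    unfolding il hilbert_m_def As_def by simp
qed

end

locale pointed_L2_dual_cone = L2_dual_cone +
  assumes pointed: "\<And>u. u \<in> C \<Longrightarrow> (\<lambda>x. - u x) \<in> C \<Longrightarrow> AE x in M. u x = 0"
begin

lemma cone_order_le:
  assumes g': "g' \<in> C" "\<not> (AE x in M. g' x = 0)"
    and b: "(\<lambda>x. b * g' x - g x) \<in> C" and a: "(\<lambda>x. g x - a * g' x) \<in> C"
  shows "a \<le> b"
proof (rule ccontr)
  assume "\<not> a \<le> b"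
  have "(\<lambda>x. (b * g' x - g x) + (g x - a * g' x)) = (\<lambda>x. (a - b) * - g' x)"
    by (simp add: fun_eq_iff algebra_simps)
  then have "(\<lambda>x. (a - b) * - g' x) \<in> C"
    using cone_add[OF b a] by simp
  then have "(\<lambda>x. - g' x) \<in> C"
    by (rule cone_scale_cancel) (use \<open>\<not> a \<le> b\<close> in simp)
  then show False
    using pointed[OF g'(1)] g'(2) by simp
qed

lemma bdd_above_lower_factors:
  assumes "g' \<in> C" "\<not> (AE x in M. g' x = 0)" "(\<lambda>x. b * g' x - g x) \<in> C"
  shows "bdd_above {a. 0 < a \<and> (\<lambda>x. g x - a * g' x) \<in> C}"
  using cone_order_le[OF assms] by (intro bdd_aboveI[of _ b]) auto

lemma hilbert_bounds:
  assumes g: "g \<in> L2 M" and g': "g' \<in> C" "\<not> (AE x in M. g' x = 0)" and equiv: "cone_equiv C g g'"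
  shows "0 < hilbert_m C g g'" "hilbert_m C g g' \<le> hilbert_M C g g'"
    and "(\<lambda>x. hilbert_M C g g' * g' x - g x) \<in> C" "(\<lambda>x. g x - hilbert_m C g g' * g' x) \<in> C"
proof -
  obtain b b' where b: "0 < b" "(\<lambda>x. b * g' x - g x) \<in> C" and b': "0 < b'" "(\<lambda>x. b' * g x - g' x) \<in> C"
    using equiv unfolding cone_equiv_def cone_le_def by auto
  have "(\<lambda>x. b' * (g x - 1 / b' * g' x)) \<in> C"
    using b' by (simp add: algebra_simps)
  then have a: "(\<lambda>x. g x - 1 / b' * g' x) \<in> C"
    using b'(1) by (rule cone_scale_cancel)
  have bdd: "bdd_above {a. 0 < a \<and> (\<lambda>x. g x - a * g' x) \<in> C}"
    by (rule bdd_above_lower_factors[OF g' b(2)])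
  show M: "(\<lambda>x. hilbert_M C g g' * g' x - g x) \<in> C"
    by (rule hilbert_M_mem[OF g g'(1) b])
  show m: "(\<lambda>x. g x - hilbert_m C g g' * g' x) \<in> C"
    by (rule hilbert_m_mem[OF g g'(1) _ a bdd]) (use b'(1) in simp)
  have "1 / b' \<le> hilbert_m C g g'"
    unfolding hilbert_m_def using a b' by (intro cSup_upper[OF _ bdd]) simp
  then show "0 < hilbert_m C g g'"
    using b' by (meson less_le_trans zero_less_divide_1_iff)
  show "hilbert_m C g g' \<le> hilbert_M C g g'"
    by (rule cone_order_le[OF g' M m])
qed

lemma hilbert_dist_le:
  assumes g': "g' \<in> C" "\<not> (AE x in M. g' x = 0)" and ab: "0 < a" "0 < b"
    and b: "(\<lambda>x. b * g' x - g x) \<in> C" and a: "(\<lambda>x. g x - a * g' x) \<in> C"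
  shows "hilbert_dist M C g g' \<le> ereal (ln (b / a))"
proof -
  have g: "g \<in> L2 M"
    using L2_lincomb[OF cone_L2[OF g'(1)] cone_L2[OF b], of b "-1"] by simp
  have "(\<lambda>x. (1 / a) * (g x - a * g' x)) \<in> C"
    using cone_scale[OF a, of "1 / a"] ab by simp
  then have "(\<lambda>x. (1 / a) * g x - g' x) \<in> C"
    using ab by (simp add: right_diff_distrib)
  then have equiv: "cone_equiv C g g'"
    unfolding cone_equiv_def cone_le_def using ab b by (intro exI[of _ b] exI[of _ "1 / a"] conjI) auto
  note bounds = hilbert_bounds[OF g g' equiv]
  have "hilbert_M C g g' \<le> b"
    unfolding hilbert_M_def using ab b by (intro cInf_lower bdd_belowI[of _ 0]) auto
  moreover have "a \<le> hilbert_m C g g'"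
    unfolding hilbert_m_def using ab a bdd_above_lower_factors[OF g' b] by (intro cSup_upper) auto
  ultimately have "hilbert_M C g g' / hilbert_m C g g' \<le> b / a"
    using bounds(1,2) ab by (intro frac_le) auto
  then have "ln (hilbert_M C g g' / hilbert_m C g g') \<le> ln (b / a)"
    using bounds(1,2) by (intro ln_mono) auto
  then show ?thesis
    unfolding hilbert_dist_def using equiv g'(2) by simp
qed

end

section \<open>Birkhoff's contraction theorem\<close>

locale sandwiched_operator = pointed_L2_dual_cone M F
  for M :: "'a measure" and F :: "('a \<Rightarrow> real) set" +
  fixes L :: "('a \<Rightarrow> real) \<Rightarrow> 'a \<Rightarrow> real" and e :: "'a \<Rightarrow> real"
    and S :: "('a \<Rightarrow> real) \<Rightarrow> real" and c c' :: real
  assumes e_in_cone: "e \<in> C" and e_nonzero: "\<not> (AE x in M. e x = 0)"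
    and S_nonneg: "\<And>h. h \<in> C \<Longrightarrow> 0 \<le> S h"
    and S_eq_0_imp_AE_zero: "\<And>h. h \<in> C \<Longrightarrow> S h = 0 \<Longrightarrow> AE x in M. h x = 0"
    and c_pos: "0 < c" and c_less: "c < c'"
    and lower_sandwich: "\<And>h. h \<in> C \<Longrightarrow> (\<lambda>x. L h x - c * S h * e x) \<in> C"
    and upper_sandwich: "\<And>h. h \<in> C \<Longrightarrow> (\<lambda>x. c' * S h * e x - L h x) \<in> C"
    and L_lincomb: "\<And>u v a b x. u \<in> L2 M \<Longrightarrow> v \<in> L2 M \<Longrightarrow>
      L (\<lambda>y. a * u y + b * v y) x = a * L u x + b * L v x"
    and L_AE_zero: "\<And>u x. u \<in> L2 M \<Longrightarrow> AE y in M. u y = 0 \<Longrightarrow> L u x = 0"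
begin

lemma L_mem_cone:
  assumes h: "h \<in> C"
  shows "L h \<in> C"
proof -
  have "(\<lambda>x. 1 * (L h x - c * S h * e x) + (c * S h) * e x) \<in> C"
    using c_pos S_nonneg[OF h] by (intro cone_lincomb lower_sandwich h e_in_cone) auto
  then show ?thesis
    by simp
qed

lemma L_nonzero:
  assumes h: "h \<in> C" "\<not> (AE x in M. h x = 0)"
  shows "\<not> (AE x in M. L h x = 0)"
proof
  assume "AE x in M. L h x = 0"
  then have "AE x in M. L h x - c * S h * e x = (c * S h) * - e x"
    by eventually_elim simp
  then have "(\<lambda>x. (c * S h) * - e x) \<in> C"
    using cone_measurable[OF e_in_cone] by (intro cone_AE_cong[OF lower_sandwich[OF h(1)]]) auto
  moreover have "0 < c * S h"
    using c_pos S_nonneg[OF h(1)] S_eq_0_imp_AE_zero[OF h(1)] h(2) by force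
  ultimately have "(\<lambda>x. - e x) \<in> C"
    by (rule cone_scale_cancel)
  then show False
    using pointed[OF e_in_cone] e_nonzero by simp
qed

lemma L_vanishes: "h \<in> C \<Longrightarrow> S h = 0 \<Longrightarrow> L h x = 0"
  using L_AE_zero cone_L2 S_eq_0_imp_AE_zero by blast

lemma sandwich_difference:
  assumes h: "h \<in> C" "h' \<in> C"
  shows "(\<lambda>x. (c' * S h') * L h x - (c * S h) * L h' x) \<in> C"
proof -
  have "(\<lambda>x. (c' * S h') * (L h x - c * S h * e x) + (c * S h) * (c' * S h' * e x - L h' x)) \<in> C"
    using h c_pos c_less S_nonneg by (intro cone_lincomb lower_sandwich upper_sandwich) auto
  then show ?thesis
    by (simp add: algebra_simps)
qed

lemma birkhoff_step_nondegenerate: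
  assumes g: "g \<in> L2 M" and g': "g' \<in> C" and mx: "0 < mx" "mx \<le> Mx"
    and u: "(\<lambda>x. Mx * g' x - g x) \<in> C" and v: "(\<lambda>x. g x - mx * g' x) \<in> C"
    and s: "0 < S (\<lambda>x. Mx * g' x - g x)" and t: "0 < S (\<lambda>x. g x - mx * g' x)"
  obtains a b where "0 < a" "0 < b" "(\<lambda>x. b * L g' x - L g x) \<in> C" "(\<lambda>x. L g x - a * L g' x) \<in> C"
    and "ln (b / a) \<le> (c' - c) / (c' + c) * ln (Mx / mx)"
proof -
  define s where "s = S (\<lambda>x. Mx * g' x - g x)"
  define t where "t = S (\<lambda>x. g x - mx * g' x)"
  define b where "b = (c' * t * Mx + c * s * mx) / (c' * t + c * s)"
  define a where "a = (c * t * Mx + c' * s * mx) / (c * t + c' * s)"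
  have Lu: "L (\<lambda>x. Mx * g' x - g x) x = Mx * L g' x - L g x" for x
    using L_lincomb[OF cone_L2[OF g'] g, of Mx "-1" x] by simp
  have Lv: "L (\<lambda>x. g x - mx * g' x) x = L g x - mx * L g' x" for x
    using L_lincomb[OF g cone_L2[OF g'], of 1 "-mx" x] by simp
  have st: "0 < s" "0 < t"
    unfolding s_def t_def using s t by auto
  have pos: "0 < c' * t + c * s" "0 < c * t + c' * s"
    using st c_pos c_less by (auto intro!: add_pos_pos)
  have "(c' * t) * (Mx * L g' x - L g x) - (c * s) * (L g x - mx * L g' x)
      = (c' * t + c * s) * (b * L g' x - L g x)" for x
    unfolding b_def using pos by (simp add: field_simps)
  then have "(\<lambda>x. (c' * t + c * s) * (b * L g' x - L g x)) \<in> C"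
    using sandwich_difference[OF u v] unfolding Lu Lv s_def t_def by simp
  then have b_mem: "(\<lambda>x. b * L g' x - L g x) \<in> C"
    using pos(1) by (rule cone_scale_cancel)
  have "(c' * s) * (L g x - mx * L g' x) - (c * t) * (Mx * L g' x - L g x)
      = (c * t + c' * s) * (L g x - a * L g' x)" for x
    unfolding a_def using pos by (simp add: field_simps)
  then have "(\<lambda>x. (c * t + c' * s) * (L g x - a * L g' x)) \<in> C"
    using sandwich_difference[OF v u] unfolding Lu Lv s_def t_def by simp
  then have a_mem: "(\<lambda>x. L g x - a * L g' x) \<in> C"
    using pos(2) by (rule cone_scale_cancel)
  have "0 < a" "0 < b"
    unfolding a_def b_def using st mx c_pos c_less by (auto intro!: divide_pos_pos add_pos_pos)
  moreover have "ln (b / a) \<le> (c' - c) / (c' + c) * ln (Mx / mx)"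
    unfolding a_def b_def using birkhoff_weighted_ratio_bound[OF c_pos c_less st mx] .
  ultimately show thesis
    using that a_mem b_mem by blast
qed

lemma birkhoff_step:
  assumes g: "g \<in> L2 M" and g': "g' \<in> C" and mx: "0 < mx" "mx \<le> Mx"
    and u: "(\<lambda>x. Mx * g' x - g x) \<in> C" and v: "(\<lambda>x. g x - mx * g' x) \<in> C"
  obtains a b where "0 < a" "0 < b" "(\<lambda>x. b * L g' x - L g x) \<in> C" "(\<lambda>x. L g x - a * L g' x) \<in> C"
    and "ln (b / a) \<le> (c' - c) / (c' + c) * ln (Mx / mx)"
proof -
  have bound_nonneg: "0 \<le> (c' - c) / (c' + c) * ln (Mx / mx)"
    using mx c_pos c_less by (intro mult_nonneg_nonneg) auto
  consider "S (\<lambda>x. Mx * g' x - g x) = 0" | "S (\<lambda>x. g x - mx * g' x) = 0"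
    | "0 < S (\<lambda>x. Mx * g' x - g x)" "0 < S (\<lambda>x. g x - mx * g' x)"
    using S_nonneg[OF u] S_nonneg[OF v] by linarith
  then show thesis
  proof cases
    case 1
    have "Mx * L g' x - L g x = 0" for x
      using L_vanishes[OF u 1, of x] L_lincomb[OF cone_L2[OF g'] g, of Mx "-1" x] by simp
    then show thesis
      using that[of Mx Mx] mx cone_zero bound_nonneg by simp
  next
    case 2
    have "L g x - mx * L g' x = 0" for x
      using L_vanishes[OF v 2, of x] L_lincomb[OF g cone_L2[OF g'], of 1 "-mx" x] by simp
    then show thesis
      using that[of mx mx] mx cone_zero bound_nonneg by simp
  next
    case 3
    show thesis
      using birkhoff_step_nondegenerate[OF assms 3] that .
  qed
qed

theorem birkhoff_contraction:
  assumes g: "g \<in> C" and g': "g' \<in> C" "\<not> (AE x in M. g' x = 0)"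
  shows "hilbert_dist M C (L g) (L g') \<le> ereal ((c' - c) / (c' + c)) * hilbert_dist M C g g'"
proof (cases "cone_equiv C g g'")
  case False
  then have "hilbert_dist M C g g' = \<infinity>"
    unfolding hilbert_dist_def by simp
  moreover have "0 < (c' - c) / (c' + c)"
    using c_pos c_less by simp
  ultimately have "ereal ((c' - c) / (c' + c)) * hilbert_dist M C g g' = \<infinity>"
    using c_pos c_less by simp
  then show ?thesis
    by (metis ereal_less_eq(1))
next
  case True
  note bounds = hilbert_bounds[OF cone_L2[OF g] g' True]
  obtain a b where ab: "0 < a" "0 < b" "(\<lambda>x. b * L g' x - L g x) \<in> C" "(\<lambda>x. L g x - a * L g' x) \<in> C"
    and ln_ab: "ln (b / a) \<le> (c' - c) / (c' + c) * ln (hilbert_M C g g' / hilbert_m C g g')"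
    using birkhoff_step[OF cone_L2[OF g] g'(1) bounds(1,2,3,4)] .
  have "hilbert_dist M C (L g) (L g') \<le> ereal (ln (b / a))"
    using L_mem_cone[OF g'(1)] L_nonzero[OF g'] ab by (rule hilbert_dist_le)
  also have "\<dots> \<le> ereal ((c' - c) / (c' + c)) * hilbert_dist M C g g'"
    using ln_ab True g'(2) unfolding hilbert_dist_def by simp
  finally show ?thesis .
qed

end

section \<open>Cones of functions with controlled tails\<close>

locale tail_cone = prob_space M for M :: "'a::metric_space measure" +
  fixes x0 :: 'a and m :: real
  assumes sets_M: "sets M = sets borel"
    and tail_pos: "0 < measure M (space M - ball_r x0 m)"
    and tail_small: "sqrt (measure M (space M - ball_r x0 m)) \<le> 1 / 32"
begin

definition \<alpha> :: "real \<Rightarrow> real" where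
  "\<alpha> r = sqrt (measure M (space M - ball_r x0 r))"

abbreviation B :: "'a set" where
  "B \<equiv> ball_r x0 m"

abbreviation A :: real where
  "A \<equiv> \<alpha> m"

abbreviation F :: "('a \<Rightarrow> real) set" where
  "F \<equiv> F_cone M x0 m m \<alpha> \<alpha>"

abbreviation G :: "('a \<Rightarrow> real) set" where
  "G \<equiv> dual_cone M F"

definition ball_mass :: "('a \<Rightarrow> real) \<Rightarrow> real" where
  "ball_mass g = (\<integral>x. indicator B x * g x \<partial>M)"

definition \<epsilon> :: real where
  "\<epsilon> = (A + A\<^sup>2) / measure M B"

lemma \<alpha>_eq: "\<alpha> = (\<lambda>r. sqrt (measure M (space M - ball_r x0 r)))"
  by (simp add: fun_eq_iff \<alpha>_def)

lemma space_M: "space M = UNIV"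
  using sets_eq_imp_space_eq[OF sets_M] by simp

lemma ball_r_sets [measurable]: "ball_r x0 r \<in> sets M"
proof -
  have "ball_r x0 r = cball x0 r"
    by (auto simp: ball_r_def)
  then show ?thesis
    unfolding sets_M by simp
qed

lemma \<alpha>_nonneg: "0 \<le> \<alpha> r"
  unfolding \<alpha>_def by simp

lemma \<alpha>_sq: "(\<alpha> r)\<^sup>2 = measure M (space M - ball_r x0 r)"
  unfolding \<alpha>_def by simp

lemma \<alpha>_le_A:
  assumes "m \<le> r"
  shows "\<alpha> r \<le> A"
proof -
  have "B \<subseteq> ball_r x0 r"
    using assms by (auto simp: ball_r_def)
  then show ?thesis
    unfolding \<alpha>_def by (intro real_sqrt_le_mono finite_measure_mono) auto
qed

lemma A_pos: "0 < A"
  using tail_pos unfolding \<alpha>_def by simp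

lemma A_le: "A \<le> 1 / 32"
  using tail_small unfolding \<alpha>_def .

lemma measure_B: "measure M B = 1 - A\<^sup>2"
  using prob_compl[of B] unfolding \<alpha>_sq by simp

lemma measure_B_ge: "1 / 2 \<le> measure M B"
proof -
  have "A\<^sup>2 \<le> (1 / 32)\<^sup>2"
    using A_le A_pos by (intro power_mono) auto
  then show ?thesis
    unfolding measure_B by (simp add: power2_eq_square)
qed

lemma \<epsilon>_pos: "0 < \<epsilon>"
  unfolding \<epsilon>_def using A_pos measure_B_ge by (intro divide_pos_pos add_pos_nonneg) auto

lemma \<epsilon>_le: "\<epsilon> \<le> 4 * A"
proof -
  have "A\<^sup>2 \<le> A"
    using A_le A_pos by (simp add: power2_eq_square)
  moreover have "4 * A * (1 / 2) \<le> 4 * A * measure M B"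
    using measure_B_ge A_pos by (intro mult_left_mono) auto
  ultimately have "A + A\<^sup>2 \<le> 4 * A * measure M B"
    by linarith
  then show ?thesis
    unfolding \<epsilon>_def using measure_B_ge by (simp add: divide_le_eq)
qed

lemma F_subset_L2: "F \<subseteq> L2 M"
  unfolding F_cone_def by auto

sublocale L2_dual_cone M F
  by unfold_locales (rule F_subset_L2)

lemma F_integrable: "f \<in> F \<Longrightarrow> integrable M f"
  using F_subset_L2 L2_integrable finite_measure_axioms by blast

lemma F_nonneg_on_ball: "f \<in> F \<Longrightarrow> AE x in M. x \<in> B \<longrightarrow> 0 \<le> f x"
  unfolding F_cone_def by auto

lemma F_tails:
  assumes "f \<in> F"
  shows "(\<integral>x. indicator (space M - B) x * max (f x) 0 \<partial>M) \<le> A * (\<integral>x. f x \<partial>M)"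
    and "(\<integral>x. indicator (space M - B) x * max (- f x) 0 \<partial>M) \<le> A * (\<integral>x. f x \<partial>M)"
  using assms unfolding F_cone_def set_lebesgue_integral_def by auto

lemma F_integral_nonneg:
  assumes "f \<in> F"
  shows "0 \<le> (\<integral>x. f x \<partial>M)"
proof -
  have "0 \<le> (\<integral>x. indicator (space M - B) x * max (f x) 0 \<partial>M)"
    by (rule integral_nonneg_AE) (auto simp: indicator_def)
  then have "0 \<le> A * (\<integral>x. f x \<partial>M)"
    using F_tails(1)[OF assms] by linarith
  then show ?thesis
    using A_pos by (simp add: zero_le_mult_iff)
qed

lemma F_abs_tail:
  assumes f: "f \<in> F"
  shows "(\<integral>x. indicator (space M - B) x * \<bar>f x\<bar> \<partial>M) \<le> 2 * A * (\<integral>x. f x \<partial>M)"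
proof -
  have "(\<lambda>x. indicator (space M - B) x * \<bar>f x\<bar>)
      = (\<lambda>x. indicator (space M - B) x * max (f x) 0 + indicator (space M - B) x * max (- f x) 0)"
    by (auto simp: indicator_def fun_eq_iff)
  then have "(\<integral>x. indicator (space M - B) x * \<bar>f x\<bar> \<partial>M)
      = (\<integral>x. indicator (space M - B) x * max (f x) 0 \<partial>M) + (\<integral>x. indicator (space M - B) x * max (- f x) 0 \<partial>M)"
    using F_integrable[OF f] by (simp add: integrable_real_mult_indicator)
  then show ?thesis
    using F_tails[OF f] by linarith
qed

lemma indicator_mem_F:
  assumes E: "E \<in> sets M" "E \<subseteq> B"
  shows "indicator E \<in> F"
proof -
  have "indicator E \<in> L2 M"
    using E by (intro L2_bounded[of _ _ 1] finite_measure_axioms) (auto simp: indicator_def)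
  moreover have "(LINT x:(space M - ball_r x0 r)|M. max (indicator E x :: real) 0) = 0" if "m \<le> r" for r
  proof -
    have "B \<subseteq> ball_r x0 r"
      using that by (auto simp: ball_r_def)
    then have "(\<lambda>x. indicator (space M - ball_r x0 r) x *\<^sub>R max (indicator E x :: real) 0) = (\<lambda>x. 0)"
      using E by (auto simp: indicator_def fun_eq_iff)
    then show ?thesis
      unfolding set_lebesgue_integral_def by (simp only: integral_zero)
  qed
  moreover have "(LINT x:(space M - ball_r x0 r)|M. max (- indicator E x :: real) 0) = 0" for r
    unfolding set_lebesgue_integral_def by (simp add: indicator_def)
  ultimately show ?thesis
    unfolding F_cone_def by (auto simp: indicator_def intro!: mult_nonneg_nonneg \<alpha>_nonneg)
qed

lemma tail_integral_le:
  assumes r: "m \<le> r" and \<phi>: "\<phi> \<in> borel_measurable M" "\<And>x. \<bar>\<phi> x\<bar> \<le> D"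
    and outside: "\<And>x. x \<notin> B \<Longrightarrow> \<phi> x \<le> t"
  shows "(LINT x:(space M - ball_r x0 r)|M. \<phi> x) \<le> t * (\<alpha> r)\<^sup>2"
proof -
  have "integrable M \<phi>"
    using \<phi> by (intro integrable_const_bound[of _ D]) auto
  then have "set_integrable M (space M - ball_r x0 r) \<phi>"
    unfolding set_integrable_def by (intro integrable_mult_indicator) auto
  moreover have "B \<subseteq> ball_r x0 r"
    using r by (auto simp: ball_r_def)
  ultimately have "(LINT x:(space M - ball_r x0 r)|M. \<phi> x) \<le> (LINT x:(space M - ball_r x0 r)|M. t)"
    using outside
    by (intro set_integral_mono) (auto simp: set_integrable_def emeasure_finite less_top[symmetric])
  also have "\<dots> = t * (\<alpha> r)\<^sup>2"
    unfolding \<alpha>_sq by (simp add: set_integral_const)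
  finally show ?thesis .
qed

lemma sign_test_integral_ge:
  assumes g: "g \<in> borel_measurable M"
  shows "A / \<epsilon> \<le> (\<integral>x. indicator B x - 1 / \<epsilon> * sgn (g x) * indicator (space M - B) x \<partial>M)"
proof -
  have "0 < A + A\<^sup>2"
    using A_pos by (auto intro: add_pos_nonneg)
  have "A / \<epsilon> + A\<^sup>2 / \<epsilon> = (A + A\<^sup>2) / \<epsilon>"
    by (simp add: add_divide_distrib)
  also have "\<dots> = measure M B"
    unfolding \<epsilon>_def using \<open>0 < A + A\<^sup>2\<close> by simp
  finally have \<epsilon>_eq: "A / \<epsilon> + A\<^sup>2 / \<epsilon> = measure M B" .
  have sgn_int: "integrable M (\<lambda>x. sgn (g x) * indicator (space M - B) x)"
    using g by (intro integrable_const_bound[of _ 1]) (auto simp: indicator_def sgn_if)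
  have ind_int: "integrable M (indicator (space M - B) :: 'a \<Rightarrow> real)"
    by (intro integrable_real_indicator) (simp_all add: emeasure_finite less_top[symmetric])
  have "(\<integral>x. sgn (g x) * indicator (space M - B) x \<partial>M) \<le> (\<integral>x. indicator (space M - B) x \<partial>M)"
    by (rule integral_mono[OF sgn_int ind_int]) (auto simp: indicator_def sgn_if)
  also have "\<dots> = A\<^sup>2"
    using \<alpha>_sq by simp
  finally have "1 / \<epsilon> * (\<integral>x. sgn (g x) * indicator (space M - B) x \<partial>M) \<le> A\<^sup>2 / \<epsilon>"
    using \<epsilon>_pos by (simp add: divide_right_mono)
  moreover have "(\<integral>x. indicator B x - 1 / \<epsilon> * sgn (g x) * indicator (space M - B) x \<partial>M)
      = measure M B - 1 / \<epsilon> * (\<integral>x. sgn (g x) * indicator (space M - B) x \<partial>M)"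
    using sgn_int by (simp add: mult.assoc emeasure_eq_measure)
  ultimately show ?thesis
    using \<epsilon>_eq by linarith
qed

lemma sign_test_mem_F:
  assumes g: "g \<in> borel_measurable M"
  shows "(\<lambda>x. indicator B x - 1 / \<epsilon> * sgn (g x) * indicator (space M - B) x) \<in> F"
proof -
  define t where "t = 1 / \<epsilon>"
  define f where "f x = indicator B x - t * sgn (g x) * indicator (space M - B) x" for x
  have t: "0 < t"
    unfolding t_def using \<epsilon>_pos by simp
  have f_meas: "f \<in> borel_measurable M"
    unfolding f_def using g by measurable
  have f_bound: "\<bar>f x\<bar> \<le> 1 + t" for x
    using t by (auto simp: f_def indicator_def sgn_if)
  have "t * (\<alpha> r)\<^sup>2 \<le> \<alpha> r * (\<integral>x. f x \<partial>M)" if "m \<le> r" for r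
  proof -
    have "t * (\<alpha> r)\<^sup>2 \<le> \<alpha> r * (t * A)"
      using \<alpha>_le_A[OF that] \<alpha>_nonneg[of r] t by (simp add: power2_eq_square mult_left_mono)
    also have "\<dots> \<le> \<alpha> r * (\<integral>x. f x \<partial>M)"
      using sign_test_integral_ge[OF g] \<alpha>_nonneg[of r] unfolding f_def t_def
      by (intro mult_left_mono) auto
    finally show ?thesis .
  qed
  moreover have "max (f x) 0 \<le> t" "max (- f x) 0 \<le> t" if "x \<notin> B" for x
    using that t by (auto simp: f_def indicator_def sgn_if)
  moreover have "\<bar>max (f x) 0\<bar> \<le> 1 + t" "\<bar>max (- f x) 0\<bar> \<le> 1 + t" for x
    using f_bound[of x] by auto
  ultimately have "(LINT x:(space M - ball_r x0 r)|M. max (f x) 0) \<le> \<alpha> r * (\<integral>x. f x \<partial>M)"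
    and "(LINT x:(space M - ball_r x0 r)|M. max (- f x) 0) \<le> \<alpha> r * (\<integral>x. f x \<partial>M)" if "m \<le> r" for r
    using tail_integral_le[OF that, of "\<lambda>x. max (f x) 0" "1 + t" t]
      tail_integral_le[OF that, of "\<lambda>x. max (- f x) 0" "1 + t" t] that f_meas
    by fastforce+
  moreover have "f \<in> L2 M"
    by (rule L2_bounded[OF finite_measure_axioms f_meas f_bound])
  ultimately show ?thesis
    unfolding F_cone_def f_def[abs_def] t_def by (auto simp: indicator_def)
qed

lemma G_integrable: "g \<in> G \<Longrightarrow> integrable M g"
  using cone_L2 L2_integrable finite_measure_axioms by blast

lemma G_nonneg_on_ball:
  assumes g: "g \<in> G"
  shows "AE x in M. x \<in> B \<longrightarrow> 0 \<le> g x"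
proof -
  define E where "E = B \<inter> {x. g x < 0}"
  have "{x \<in> space M. g x < 0} \<in> sets M"
    using cone_measurable[OF g] by measurable
  then have E: "E \<in> sets M"
    unfolding E_def space_M by simp
  have gi: "integrable M g"
    using G_integrable[OF g] .
  have "indicator E \<in> F"
    using E by (intro indicator_mem_F) (auto simp: E_def)
  then have "0 \<le> (\<integral>x. indicator E x * g x \<partial>M)"
    using coneD[OF g] by blast
  moreover have nonneg: "AE x in M. 0 \<le> - (indicator E x * g x)"
    by (auto simp: E_def indicator_def)
  ultimately have "(\<integral>x. - (indicator E x * g x) \<partial>M) = 0"
    using integral_nonneg_AE[OF nonneg] by simp
  then have "AE x in M. - (indicator E x * g x) = 0"
    using integral_nonneg_eq_0_iff_AE[OF _ nonneg] integrable_real_mult_indicator[OF gi E] by simp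
  then show ?thesis
    by eventually_elim (auto simp: E_def indicator_def split: if_splits)
qed

lemma ball_mass_nonneg: "g \<in> G \<Longrightarrow> 0 \<le> ball_mass g"
  unfolding ball_mass_def using G_nonneg_on_ball
  by (intro integral_nonneg_AE) (auto simp: indicator_def)

lemma G_tail_le:
  assumes g: "g \<in> G"
  shows "(\<integral>x. indicator (space M - B) x * \<bar>g x\<bar> \<partial>M) \<le> \<epsilon> * ball_mass g"
proof -
  have gi: "integrable M g"
    using G_integrable[OF g] .
  have "0 \<le> (\<integral>x. (indicator B x - 1 / \<epsilon> * sgn (g x) * indicator (space M - B) x) * g x \<partial>M)"
    using coneD[OF g sign_test_mem_F[OF cone_measurable[OF g]]] .
  also have "(\<lambda>x. (indicator B x - 1 / \<epsilon> * sgn (g x) * indicator (space M - B) x) * g x)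
      = (\<lambda>x. indicator B x * g x - 1 / \<epsilon> * (indicator (space M - B) x * \<bar>g x\<bar>))"
    by (auto simp: fun_eq_iff indicator_def sgn_if)
  also have "(\<integral>x. indicator B x * g x - 1 / \<epsilon> * (indicator (space M - B) x * \<bar>g x\<bar>) \<partial>M)
      = ball_mass g - 1 / \<epsilon> * (\<integral>x. indicator (space M - B) x * \<bar>g x\<bar> \<partial>M)"
    unfolding ball_mass_def using gi by (simp add: integrable_real_mult_indicator)
  finally show ?thesis
    using \<epsilon>_pos by (simp add: field_simps)
qed

lemma integral_abs_le_ball_mass:
  assumes g: "g \<in> G"
  shows "(\<integral>x. \<bar>g x\<bar> \<partial>M) \<le> (1 + \<epsilon>) * ball_mass g"
proof -
  have gi: "integrable M g"
    using G_integrable[OF g] .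
  have "(\<integral>x. \<bar>g x\<bar> \<partial>M) = (\<integral>x. indicator B x * g x + indicator (space M - B) x * \<bar>g x\<bar> \<partial>M)"
    using G_nonneg_on_ball[OF g] gi
    by (intro integral_cong_AE) (auto elim!: eventually_mono simp: indicator_def space_M)
  also have "\<dots> = ball_mass g + (\<integral>x. indicator (space M - B) x * \<bar>g x\<bar> \<partial>M)"
    unfolding ball_mass_def using gi by (simp add: integrable_real_mult_indicator)
  also have "\<dots> \<le> (1 + \<epsilon>) * ball_mass g"
    using G_tail_le[OF g] by (simp add: algebra_simps)
  finally show ?thesis .
qed

lemma ball_mass_eq_0_imp_AE_zero:
  assumes g: "g \<in> G" and "ball_mass g = 0"
  shows "AE x in M. g x = 0"
proof -
  have "(\<integral>x. \<bar>g x\<bar> \<partial>M) = 0"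
    using integral_abs_le_ball_mass[OF g] assms(2) by (simp add: antisym)
  then show ?thesis
    using integral_nonneg_eq_0_iff_AE[of M "\<lambda>x. \<bar>g x\<bar>"] G_integrable[OF g] by simp
qed

lemma ball_mass_uminus: "integrable M g \<Longrightarrow> ball_mass (\<lambda>x. - g x) = - ball_mass g"
  unfolding ball_mass_def by simp

sublocale pointed_L2_dual_cone M F
proof
  fix u
  assume u: "u \<in> G" and "(\<lambda>x. - u x) \<in> G"
  then have "0 \<le> - ball_mass u"
    using ball_mass_nonneg ball_mass_uminus[OF G_integrable[OF u]] by metis
  then have "ball_mass u = 0"
    using ball_mass_nonneg[OF u] by simp
  then show "AE x in M. u x = 0"
    by (rule ball_mass_eq_0_imp_AE_zero[OF u])
qed

lemma integral_minus_tail_le: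
  fixes f :: "'a \<Rightarrow> real"
  assumes fi: "integrable M f"
  shows "(\<integral>x. f x \<partial>M) - (\<integral>x. indicator (space M - B) x * \<bar>f x\<bar> \<partial>M) \<le> (\<integral>x. indicator B x * f x \<partial>M)"
proof -
  have "(\<lambda>x. indicator B x * f x + indicator (space M - B) x * f x) = f"
    by (auto simp: fun_eq_iff indicator_def space_M)
  then have "(\<integral>x. f x \<partial>M) = (\<integral>x. indicator B x * f x + indicator (space M - B) x * f x \<partial>M)"
    by simp
  moreover have "(\<integral>x. indicator (space M - B) x * f x \<partial>M) \<le> (\<integral>x. indicator (space M - B) x * \<bar>f x\<bar> \<partial>M)"
    using fi by (intro integral_mono integrable_real_mult_indicator) (auto simp: indicator_def)
  ultimately show ?thesis
    using fi by (simp add: integrable_real_mult_indicator)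
qed

lemma F_pairing_ge:
  assumes f: "f \<in> F" and u: "u \<in> L2 M" and low: "\<And>x. x \<in> B \<Longrightarrow> \<delta> \<le> u x"
    and bnd: "\<And>x. \<bar>u x\<bar> \<le> D" and \<delta>: "0 \<le> \<delta>"
  shows "\<delta> * (\<integral>x. f x \<partial>M) - (\<delta> + D) * (\<integral>x. indicator (space M - B) x * \<bar>f x\<bar> \<partial>M)
    \<le> (\<integral>x. f x * u x \<partial>M)"
proof -
  have fi: "integrable M f"
    using F_integrable[OF f] .
  define I where "I = (\<integral>x. indicator (space M - B) x * \<bar>f x\<bar> \<partial>M)"
  have "AE x in M. \<delta> * (indicator B x * f x) - D * (indicator (space M - B) x * \<bar>f x\<bar>) \<le> f x * u x"
    using F_nonneg_on_ball[OF f]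
  proof eventually_elim
    case (elim x)
    show ?case
    proof (cases "x \<in> B")
      case True
      then show ?thesis
        using elim low[of x] mult_left_mono[of \<delta> "u x" "f x"] by (simp add: mult.commute)
    next
      case False
      have "\<bar>f x * u x\<bar> \<le> \<bar>f x\<bar> * D"
        using bnd[of x] by (simp add: abs_mult mult_left_mono)
      then show ?thesis
        using False by (simp add: space_M mult.commute abs_le_iff)
    qed
  qed
  then have "(\<integral>x. \<delta> * (indicator B x * f x) - D * (indicator (space M - B) x * \<bar>f x\<bar>) \<partial>M)
      \<le> (\<integral>x. f x * u x \<partial>M)"
    using fi L2_mult_integrable[OF F_subset_L2[THEN subsetD, OF f] u]
    by (intro integral_mono_AE) (auto simp: integrable_real_mult_indicator)
  then have "\<delta> * (\<integral>x. indicator B x * f x \<partial>M) - D * I \<le> (\<integral>x. f x * u x \<partial>M)"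
    unfolding I_def using fi by (simp add: integrable_real_mult_indicator)
  moreover have "(\<integral>x. f x \<partial>M) - I \<le> (\<integral>x. indicator B x * f x \<partial>M)"
    unfolding I_def by (rule integral_minus_tail_le[OF fi])
  then have "\<delta> * ((\<integral>x. f x \<partial>M) - I) \<le> \<delta> * (\<integral>x. indicator B x * f x \<partial>M)"
    using \<delta> by (rule mult_left_mono)
  ultimately show ?thesis
    unfolding I_def[symmetric] by (simp add: algebra_simps)
qed

lemma G_memI_bounded:
  assumes u: "u \<in> borel_measurable M" and low: "\<And>x. x \<in> B \<Longrightarrow> \<delta> \<le> u x"
    and bnd: "\<And>x. \<bar>u x\<bar> \<le> D" and \<delta>: "0 \<le> \<delta>" and small: "2 * A * D \<le> \<delta> * (1 - 2 * A)"
  shows "u \<in> G"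
proof (rule coneI)
  show uL: "u \<in> L2 M"
    by (rule L2_bounded[OF finite_measure_axioms u bnd])
  fix f
  assume f: "f \<in> F"
  define I where "I = (\<integral>x. indicator (space M - B) x * \<bar>f x\<bar> \<partial>M)"
  define J where "J = (\<integral>x. f x \<partial>M)"
  have I: "I \<le> 2 * A * J" and J: "0 \<le> J"
    unfolding I_def J_def using F_abs_tail[OF f] F_integral_nonneg[OF f] by auto
  have D: "0 \<le> D"
    using bnd[of x0] by simp
  have "0 \<le> (\<delta> * (1 - 2 * A) - 2 * A * D) * J"
    using small J by simp
  also have "\<dots> = \<delta> * J - (\<delta> + D) * (2 * A * J)"
    by (simp add: algebra_simps)
  also have "\<dots> \<le> \<delta> * J - (\<delta> + D) * I"
    using I \<delta> D by (simp add: mult_left_mono)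
  also have "\<dots> \<le> (\<integral>x. f x * u x \<partial>M)"
    unfolding I_def J_def by (rule F_pairing_ge[OF f uL low bnd \<delta>])
  finally show "0 \<le> (\<integral>x. f x * u x \<partial>M)" .
qed

lemma one_mem_G: "(\<lambda>x. 1) \<in> G"
  by (rule G_memI_bounded[of _ 1 1]) (use A_le in auto)

end

section \<open>The kernel operator\<close>

locale kernel_tail_cone = tail_cone +
  fixes K :: "'a \<Rightarrow> 'a \<Rightarrow> real" and l :: real
  assumes K_meas: "(\<lambda>(x, y). K x y) \<in> borel_measurable (borel \<Otimes>\<^sub>M borel)"
    and K_nonneg: "\<And>x y. 0 \<le> K x y" and K_le_1: "\<And>x y. K x y \<le> 1"
    and K_lower: "\<And>x y. x \<in> B \<Longrightarrow> y \<in> B \<Longrightarrow> l \<le> K x y"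
    and l_pos: "0 < l"
    and A_le_l: "A \<le> l / 32"
begin

lemma K_measurable_pair: "(\<lambda>(x, y). K x y) \<in> borel_measurable (M \<Otimes>\<^sub>M M)"
proof -
  have "(borel_measurable (M \<Otimes>\<^sub>M M) :: ('a \<times> 'a \<Rightarrow> real) set) = borel_measurable (borel \<Otimes>\<^sub>M borel)"
    by (rule measurable_cong_sets[OF sets_pair_measure_cong[OF sets_M sets_M] refl])
  then show ?thesis
    using K_meas by simp
qed

lemma K_measurable [measurable]: "(\<lambda>y. K x y) \<in> borel_measurable M"
proof -
  have "Pair x \<in> measurable M (M \<Otimes>\<^sub>M M)"
    using measurable_Pair1'[of x M M] space_M by simp
  from measurable_compose[OF this K_measurable_pair] show ?thesis
    by simp
qed

lemma abs_K_mult_le: "\<bar>K x y * c\<bar> \<le> \<bar>c\<bar>"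
  using mult_right_mono[OF K_le_1 abs_ge_zero, of x y c] K_nonneg[of x y] by (simp add: abs_mult)

lemma integrable_K_mult:
  assumes g: "integrable M g"
  shows "integrable M (\<lambda>y. K x y * g y)"
proof (rule Bochner_Integration.integrable_bound[of _ "\<lambda>y. \<bar>g y\<bar>"])
  show "(\<lambda>y. K x y * g y) \<in> borel_measurable M"
    using g by measurable
  show "AE y in M. norm (K x y * g y) \<le> norm \<bar>g y\<bar>"
    using abs_K_mult_le by simp
qed (use g in simp)

lemma L_op_measurable:
  assumes g: "integrable M g"
  shows "L_op M K g \<in> borel_measurable M"
proof -
  have [measurable]: "g \<in> borel_measurable M"
    using g by simp
  note K_measurable_pair [measurable]
  have "(\<lambda>(x, y). K x y * g y) \<in> borel_measurable (M \<Otimes>\<^sub>M M)"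
    by measurable
  then show ?thesis
    unfolding L_op_def using borel_measurable_lebesgue_integral[of "\<lambda>x y. K x y * g y" M] by simp
qed

lemma L_op_abs_le:
  assumes g: "integrable M g"
  shows "\<bar>L_op M K g x\<bar> \<le> (\<integral>y. \<bar>g y\<bar> \<partial>M)"
proof -
  have "\<bar>L_op M K g x\<bar> \<le> (\<integral>y. \<bar>K x y * g y\<bar> \<partial>M)"
    unfolding L_op_def using integral_norm_bound[of M "\<lambda>y. K x y * g y"] by simp
  also have "\<dots> \<le> (\<integral>y. \<bar>g y\<bar> \<partial>M)"
  proof (rule integral_mono)
    show "integrable M (\<lambda>y. \<bar>K x y * g y\<bar>)"
      using integrable_K_mult[OF g] by simp
    show "\<bar>K x y * g y\<bar> \<le> \<bar>g y\<bar>" for y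
      by (rule abs_K_mult_le)
  qed (use g in simp)
  finally show ?thesis .
qed

lemma L_op_lincomb:
  assumes "integrable M u" "integrable M v"
  shows "L_op M K (\<lambda>y. a * u y + b * v y) x = a * L_op M K u x + b * L_op M K v x"
proof -
  have "(\<lambda>y. K x y * (a * u y + b * v y)) = (\<lambda>y. a * (K x y * u y) + b * (K x y * v y))"
    by (auto simp: algebra_simps)
  then show ?thesis
    unfolding L_op_def using integrable_K_mult[OF assms(1)] integrable_K_mult[OF assms(2)] by simp
qed

lemma L_op_AE_zero:
  assumes "u \<in> borel_measurable M" "AE y in M. u y = 0"
  shows "L_op M K u x = 0"
proof -
  have "(\<integral>y. K x y * u y \<partial>M) = (\<integral>y. 0 \<partial>M)"
    using assms by (intro integral_cong_AE) auto
  then show ?thesis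
    unfolding L_op_def by simp
qed

lemma l_le_1: "l \<le> 1"
proof -
  have "B \<noteq> {}"
    using measure_B_ge by auto
  then obtain y where "y \<in> B"
    by blast
  then show ?thesis
    using K_lower[of y y] K_le_1[of y y] by linarith
qed

lemma \<epsilon>_le_l: "\<epsilon> \<le> l / 8"
  using \<epsilon>_le A_le_l by simp

lemma L_op_ge_on_ball:
  assumes g: "g \<in> G" and x: "x \<in> B"
  shows "(l - \<epsilon>) * ball_mass g \<le> L_op M K g x"
proof -
  have gi: "integrable M g"
    using G_integrable[OF g] .
  have "AE y in M. l * (indicator B y * g y) - indicator (space M - B) y * \<bar>g y\<bar> \<le> K x y * g y"
    using G_nonneg_on_ball[OF g]
  proof eventually_elim
    case (elim y)
    show ?case
    proof (cases "y \<in> B")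
      case True
      then show ?thesis
        using elim K_lower[OF x True] mult_right_mono[of l "K x y" "g y"] by simp
    next
      case False
      have "\<bar>K x y * g y\<bar> \<le> \<bar>g y\<bar>"
        by (rule abs_K_mult_le)
      then show ?thesis
        using False by (simp add: space_M abs_le_iff)
    qed
  qed
  then have "(\<integral>y. l * (indicator B y * g y) - indicator (space M - B) y * \<bar>g y\<bar> \<partial>M) \<le> L_op M K g x"
    unfolding L_op_def using gi integrable_K_mult[OF gi]
    by (intro integral_mono_AE) (auto simp: integrable_real_mult_indicator)
  then have "l * ball_mass g - (\<integral>y. indicator (space M - B) y * \<bar>g y\<bar> \<partial>M) \<le> L_op M K g x"
    unfolding ball_mass_def using gi by (simp add: integrable_real_mult_indicator)
  then show ?thesis
    using G_tail_le[OF g] by (simp add: algebra_simps)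
qed

lemma L_op_abs_le_ball_mass: "g \<in> G \<Longrightarrow> \<bar>L_op M K g x\<bar> \<le> (1 + \<epsilon>) * ball_mass g"
  using L_op_abs_le[OF G_integrable] integral_abs_le_ball_mass by (rule order_trans)

lemma L_op_lower_sandwich:
  assumes g: "g \<in> G"
  shows "(\<lambda>x. L_op M K g x - l / 2 * ball_mass g) \<in> G"
proof (rule G_memI_bounded[of _ "(l / 2 - \<epsilon>) * ball_mass g" "3 * ball_mass g"])
  have S: "0 \<le> ball_mass g"
    using ball_mass_nonneg[OF g] .
  show "(\<lambda>x. L_op M K g x - l / 2 * ball_mass g) \<in> borel_measurable M"
    using L_op_measurable[OF G_integrable[OF g]] by measurable
  show "(l / 2 - \<epsilon>) * ball_mass g \<le> L_op M K g x - l / 2 * ball_mass g" if "x \<in> B" for x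
    using L_op_ge_on_ball[OF g that] by (simp add: algebra_simps)
  have "(1 + \<epsilon> + l / 2) * ball_mass g \<le> 3 * ball_mass g"
    using \<epsilon>_le_l l_le_1 S by (intro mult_right_mono) auto
  moreover have "0 \<le> l / 2 * ball_mass g"
    using l_pos S by simp
  ultimately show "\<bar>L_op M K g x - l / 2 * ball_mass g\<bar> \<le> 3 * ball_mass g" for x
    using L_op_abs_le_ball_mass[OF g, of x] unfolding abs_le_iff distrib_right by linarith
  show "0 \<le> (l / 2 - \<epsilon>) * ball_mass g"
    using \<epsilon>_le_l l_pos S by simp
  have "3 * l / 8 * (1 / 2) \<le> (l / 2 - \<epsilon>) * (1 - 2 * A)"
    using \<epsilon>_le_l A_le l_pos by (intro mult_mono) auto
  then have "2 * A * 3 \<le> (l / 2 - \<epsilon>) * (1 - 2 * A)"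
    using A_le_l by simp
  then have "(2 * A * 3) * ball_mass g \<le> ((l / 2 - \<epsilon>) * (1 - 2 * A)) * ball_mass g"
    using S by (rule mult_right_mono)
  then show "2 * A * (3 * ball_mass g) \<le> (l / 2 - \<epsilon>) * ball_mass g * (1 - 2 * A)"
    by (simp add: mult_ac)
qed

lemma L_op_upper_sandwich:
  assumes g: "g \<in> G"
  shows "(\<lambda>x. 3 * ball_mass g - L_op M K g x) \<in> G"
proof (rule G_memI_bounded[of _ "ball_mass g" "5 * ball_mass g"])
  have S: "0 \<le> ball_mass g"
    using ball_mass_nonneg[OF g] .
  have "(1 + \<epsilon>) * ball_mass g \<le> 2 * ball_mass g"
    using \<epsilon>_le_l l_le_1 S by (intro mult_right_mono) auto
  then have L: "\<bar>L_op M K g x\<bar> \<le> 2 * ball_mass g" for x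
    using L_op_abs_le_ball_mass[OF g, of x] by linarith
  show "(\<lambda>x. 3 * ball_mass g - L_op M K g x) \<in> borel_measurable M"
    using L_op_measurable[OF G_integrable[OF g]] by measurable
  show "ball_mass g \<le> 3 * ball_mass g - L_op M K g x" for x
    using L[of x] by linarith
  show "\<bar>3 * ball_mass g - L_op M K g x\<bar> \<le> 5 * ball_mass g" for x
    using L[of x] S by linarith
  show "0 \<le> ball_mass g"
    using S .
  have "10 * A * ball_mass g \<le> (1 - 2 * A) * ball_mass g"
    using A_le S by (intro mult_right_mono) auto
  then show "2 * A * (5 * ball_mass g) \<le> ball_mass g * (1 - 2 * A)"
    by (simp add: algebra_simps)
qed

sublocale sandwiched_operator M F "L_op M K" "\<lambda>x. 1" ball_mass "l / 2" 3
proof unfold_locales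
  show "(\<lambda>x. 1) \<in> G"
    by (rule one_mem_G)
  show "\<not> (AE x in M. (1 :: real) = 0)"
    by simp
  show "0 < l / 2" "l / 2 < 3"
    using l_pos l_le_1 by auto
  show "0 \<le> ball_mass h" if "h \<in> G" for h
    using ball_mass_nonneg[OF that] .
  show "AE x in M. h x = 0" if "h \<in> G" "ball_mass h = 0" for h
    using ball_mass_eq_0_imp_AE_zero[OF that] .
  show "(\<lambda>x. L_op M K h x - l / 2 * ball_mass h * 1) \<in> G" if "h \<in> G" for h
    using L_op_lower_sandwich[OF that] by simp
  show "(\<lambda>x. 3 * ball_mass h * 1 - L_op M K h x) \<in> G" if "h \<in> G" for h
    using L_op_upper_sandwich[OF that] by simp
  show "L_op M K (\<lambda>y. a * u y + b * v y) x = a * L_op M K u x + b * L_op M K v x"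
    if "u \<in> L2 M" "v \<in> L2 M" for u v a b x
    using L_op_lincomb L2_integrable[OF finite_measure_axioms] that by blast
  show "L_op M K u x = 0" if "u \<in> L2 M" "AE y in M. u y = 0" for u x
    using L_op_AE_zero that unfolding L2_def by blast
qed


theorem strict_contraction:
  "let \<alpha> = (\<lambda>r. sqrt (measure M (space M - ball_r x0 r))); G = G_cone M x0 m m \<alpha> \<alpha>
   in \<exists>\<kappa>::real. 0 < \<kappa> \<and> \<kappa> < 1 \<and>
     (\<forall>g \<in> G. \<forall>g' \<in> G. \<not> (AE x in M. g x = 0) \<longrightarrow> \<not> (AE x in M. g' x = 0) \<longrightarrow>
        hilbert_dist M G (L_op M K g) (L_op M K g') \<le> ereal \<kappa> * hilbert_dist M G g g')"
  unfolding Let_def \<alpha>_eq[symmetric] G_cone_eq_dual_cone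
proof (intro exI[of _ "(3 - l / 2) / (3 + l / 2)"] conjI ballI impI)
  show "0 < (3 - l / 2) / (3 + l / 2)" "(3 - l / 2) / (3 + l / 2) < 1"
    using l_pos l_le_1 by auto
  show "hilbert_dist M G (L_op M K g) (L_op M K g') \<le> ereal ((3 - l / 2) / (3 + l / 2)) * hilbert_dist M G g g'"
    if "g \<in> G" "g' \<in> G" "\<not> (AE x in M. g' x = 0)" for g g'
    using that by (rule birkhoff_contraction)
qed

end

lemma lower_decay_le:
  assumes "lower_decay x0 K l" "\<And>x y. 0 \<le> K x y" "0 < r" "x \<in> ball_r x0 r" "y \<in> ball_r x0 r"
  shows "l r \<le> K x y"
proof -
  have "l r \<le> (INF p\<in>ball_r x0 r \<times> ball_r x0 r. K (fst p) (snd p))"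
    using assms(1,3) unfolding lower_decay_def by auto
  also have "\<dots> \<le> K (fst (x, y)) (snd (x, y))"
    using assms(2,4,5) by (intro cINF_lower bdd_belowI[of _ 0]) auto
  finally show ?thesis
    by simp
qed

lemma eventually_sqrt_le_decay:
  fixes T l :: "real \<Rightarrow> real"
  assumes lim: "((\<lambda>r. T r / (l r)\<^sup>2) \<longlongrightarrow> 0) at_top" and l_pos: "\<forall>\<^sub>F r in at_top. 0 < l r"
    and c: "0 < c"
  shows "\<forall>\<^sub>F r in at_top. 0 < l r \<and> sqrt (T r) \<le> c * l r"
proof -
  have "\<forall>\<^sub>F r in at_top. T r / (l r)\<^sup>2 < c\<^sup>2"
    using order_tendstoD(2)[OF lim] c by simp
  with l_pos show ?thesis
  proof eventually_elim
    case (elim r)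
    then have "T r < (c * l r)\<^sup>2"
      by (simp add: divide_less_eq power_mult_distrib)
    then have "sqrt (T r) \<le> sqrt ((c * l r)\<^sup>2)"
      by (intro real_sqrt_le_mono) simp
    then show ?case
      using elim c by simp
  qed
qed

lemma kernel_tail_cone_of_lower_decay:
  assumes "prob_space M" "sets M = sets borel"
    and "(\<lambda>(x, y). K x y) \<in> borel_measurable (borel \<Otimes>\<^sub>M borel)"
    and K: "\<And>x y. 0 < K x y \<and> K x y \<le> 1" and decay: "lower_decay x0 K l"
    and standing: "\<And>r. 0 < r \<Longrightarrow> 0 < measure M (space M - ball_r x0 r)"
    and m: "0 < m" "0 < l m" "sqrt (measure M (space M - ball_r x0 m)) \<le> 1 / 32 * l m"
  shows "kernel_tail_cone M x0 m K (l m)"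
proof -
  have K_nonneg: "0 \<le> K x y" for x y
    using K[of x y] by simp
  have "x0 \<in> ball_r x0 m"
    using m by (simp add: ball_r_def)
  then have "l m \<le> 1"
    using lower_decay_le[OF decay K_nonneg m(1)] K[of x0 x0] by (meson order_trans)
  then have "tail_cone M x0 m"
    using assms(1,2) m standing[OF m(1)] by (intro tail_cone.intro tail_cone_axioms.intro) auto
  then show ?thesis
    using assms(3) m K K_nonneg lower_decay_le[OF decay K_nonneg m(1)]
    by (intro kernel_tail_cone.intro kernel_tail_cone_axioms.intro) (auto simp: tail_cone.\<alpha>_def)
qed

theorem corollary4p7:
  fixes M :: "'a::polish_space measure" and x0 :: 'a
    and K :: "'a \<Rightarrow> 'a \<Rightarrow> real" and l :: "real \<Rightarrow> real"
  assumes prob: "prob_space M" and sets_M: "sets M = sets borel"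
    and K_meas: "(\<lambda>(x, y). K x y) \<in> borel_measurable (borel \<Otimes>\<^sub>M borel)"
    and K_range: "\<And>x y. 0 < K x y \<and> K x y \<le> 1"
    and decay: "lower_decay x0 K l"
    and l_pos: "\<forall>\<^sub>F r in at_top. l r > 0"
    and lim: "((\<lambda>r. measure M (space M - ball_r x0 r) / (l r)\<^sup>2) \<longlongrightarrow> 0) at_top"
    and standing: "\<And>r. r > 0 \<Longrightarrow> measure M (space M - ball_r x0 r) > 0"
  shows "\<exists>m_low>0. \<forall>m>m_low.
           (let \<alpha> = (\<lambda>r. sqrt (measure M (space M - ball_r x0 r)));
                G = G_cone M x0 m m \<alpha> \<alpha>
            in \<exists>\<kappa>::real. 0 < \<kappa> \<and> \<kappa> < 1 \<and>
                 (\<forall>g \<in> G. \<forall>g' \<in> G. \<not> (AE x in M. g x = 0) \<longrightarrow> \<not> (AE x in M. g' x = 0) \<longrightarrow>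
                    hilbert_dist M G (L_op M K g) (L_op M K g')
                      \<le> ereal \<kappa> * hilbert_dist M G g g'))"
proof -
  obtain N where N: "\<And>r. N \<le> r \<Longrightarrow> 0 < l r \<and> sqrt (measure M (space M - ball_r x0 r)) \<le> 1 / 32 * l r"
    using eventually_sqrt_le_decay[OF lim l_pos, of "1 / 32"] unfolding eventually_at_top_linorder by auto
  have "kernel_tail_cone M x0 m K (l m)" if "max N 1 < m" for m
    using kernel_tail_cone_of_lower_decay[OF prob sets_M K_meas K_range decay standing, of m] N[of m] that
    by auto
  then show ?thesis
    by (intro exI[of _ "max N 1"] conjI allI impI kernel_tail_cone.strict_contraction) auto
qed

end
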